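(* Let $G$ be a finite simple graph on $\{x_1,\dots,x_n\}$, $S=\mathbb{K}[x_1,\dots,x_n]$, and let $x_ix_j$ be an edge of $G$. Set $L:=N_G(x_i)\cap N_G(x_j)$ and let $G'$ be the graph with $V(G')=V(G)\setminus L$ and edge set $$E(G')=E(G\setminus L)\cup\{x_px_q\mid x_p\in N_{G\setminus L}(x_i),\ x_q\in N_{G\setminus L}(x_j)\}.$$ Then, as ideals of $S$, $$(I(G):x_i)\cap (I(G):x_j)=I(G')+(L),$$ where $(L)$ is the ideal generated by the variables in $L$.
   Context: Vertices of $G$ are identified with variables of $S$; the edge ideal is $I(G)=(x_px_q : x_px_q\in E(G))\subseteq S$, and for a graph on a subset of the vertices its edge ideal is likewise taken in $S$. $N_G(x)$ denotes the neighbour set of $x$. For $U\subseteq V(G)$, $G\setminus U$ has vertex set $V(G)\setminus U$ and edge set $\{e\in E(G): e\cap U=\emptyset\}$. $(I:u)$ denotes the colon ideal $\{f\in S: fu\in I\}$. *)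

theory Defs
  imports Main HOL.Modules "HOL-Library.Poly_Mapping"
begin

text \<open>Polynomial ring S = K[x_v : v in 'v] is modelled as
  (('v =>0 nat) =>0 'k): finitely supported maps from exponent vectors (monomials)
  to coefficients, with the convolution product from Poly_Mapping.\<close>

definition var :: "'v \<Rightarrow> ('v \<Rightarrow>\<^sub>0 nat) \<Rightarrow>\<^sub>0 'k::comm_ring_1" where
  "var v = Poly_Mapping.single (Poly_Mapping.single v 1) 1"

definition ideal_gen :: "'a::comm_ring_1 set \<Rightarrow> 'a set" where
  "ideal_gen A = module.span (*) A"

definition ideal_sum :: "'a::comm_ring_1 set \<Rightarrow> 'a set \<Rightarrow> 'a set" where
  "ideal_sum I J = {a + b | a b. a \<in> I \<and> b \<in> J}"

definition colon :: "'a::comm_ring_1 set \<Rightarrow> 'a \<Rightarrow> 'a set" where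
  "colon I u = {f. f * u \<in> I}"

text \<open>Graphs: a simple graph on vertex set 'v is given by its edge set, a set of 2-element sets.\<close>
definition edge_ideal :: "'v set set \<Rightarrow> (('v \<Rightarrow>\<^sub>0 nat) \<Rightarrow>\<^sub>0 'k::comm_ring_1) set" where
  "edge_ideal E = ideal_gen {var p * var q | p q. {p, q} \<in> E}"

definition nbr :: "'v set set \<Rightarrow> 'v \<Rightarrow> 'v set" where
  "nbr E x = {y. {x, y} \<in> E}"

definition del_vertices :: "'v set set \<Rightarrow> 'v set \<Rightarrow> 'v set set" where
  "del_vertices E U = {e \<in> E. e \<inter> U = {}}"

text \<open>Edge set of the graph G' from the lemma (its vertex set is V(G) minus L).\<close>
definition graph_G' :: "'v set set \<Rightarrow> 'v \<Rightarrow> 'v \<Rightarrow> 'v set set" where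
  "graph_G' E i j =
     (let L = nbr E i \<inter> nbr E j; E0 = del_vertices E L in
      E0 \<union> {{p, q} | p q. p \<in> nbr E0 i \<and> q \<in> nbr E0 j})"

end

theory Submission imports Defs begin

text \<open>All ideals involved are monomial ideals, and a polynomial lies in a monomial ideal iff every
  monomial of its support is divisible by a generator (for exponent vectors, \<open>x\<^sup>m\<close> divides \<open>x\<^sup>a\<close>
  iff \<open>\<exists>c. a = m + c\<close>). Multiplying by \<open>x\<^sub>i\<close> adds \<open>x\<^sub>i\<close> to the support of a monomial, so for a
  monomial with support \<open>U\<close> the left side says that both \<open>U \<union> {x\<^sub>i}\<close> and \<open>U \<union> {x\<^sub>j}\<close> contain an edge of
  \<open>G\<close>, and the right side that \<open>U\<close> contains an edge of \<open>G'\<close> or meets \<open>L\<close>. If \<open>U\<close> misses \<open>L\<close>, an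
  edge inside \<open>U\<close> avoids \<open>L\<close>, and neighbours of \<open>x\<^sub>i\<close> and \<open>x\<^sub>j\<close> in \<open>U\<close> are joined in \<open>G'\<close>.\<close>

global_interpretation ring_module: module "(*) :: 'a::comm_ring_1 \<Rightarrow> 'a \<Rightarrow> 'a"
  by unfold_locales (auto simp: algebra_simps)

definition monomial_ideal :: "('v \<Rightarrow>\<^sub>0 nat) set \<Rightarrow> (('v \<Rightarrow>\<^sub>0 nat) \<Rightarrow>\<^sub>0 'k::comm_ring_1) set" where
  "monomial_ideal M = ideal_gen ((\<lambda>m. Poly_Mapping.single m 1) ` M)"

lemma poly_mapping_sum_single_lookup:
  "f = (\<Sum>a\<in>Poly_Mapping.keys f. Poly_Mapping.single a (Poly_Mapping.lookup f a))"
  by (rule poly_mapping_eqI) (simp add: lookup_sum lookup_single when_def sum.delta in_keys_iff)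

lemma lookup_mult_single_one:
  fixes f :: "('v \<Rightarrow>\<^sub>0 nat) \<Rightarrow>\<^sub>0 'k::comm_ring_1"
  shows "Poly_Mapping.lookup (f * Poly_Mapping.single m 1) (a + m) = Poly_Mapping.lookup f a"
proof -
  have "f * Poly_Mapping.single m 1
      = (\<Sum>b\<in>Poly_Mapping.keys f. Poly_Mapping.single (b + m) (Poly_Mapping.lookup f b))"
    by (subst poly_mapping_sum_single_lookup) (simp add: sum_distrib_right mult_single)
  then show ?thesis
    by (simp add: lookup_sum lookup_single when_def sum.delta in_keys_iff)
qed

lemma keys_mult_single_one:
  fixes f :: "('v \<Rightarrow>\<^sub>0 nat) \<Rightarrow>\<^sub>0 'k::comm_ring_1"
  shows "Poly_Mapping.keys (f * Poly_Mapping.single m 1) = (\<lambda>a. a + m) ` Poly_Mapping.keys f"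
proof
  show "Poly_Mapping.keys (f * Poly_Mapping.single m 1) \<subseteq> (\<lambda>a. a + m) ` Poly_Mapping.keys f"
    using keys_mult[of f "Poly_Mapping.single m 1"] by auto
  show "(\<lambda>a. a + m) ` Poly_Mapping.keys f \<subseteq> Poly_Mapping.keys (f * Poly_Mapping.single m 1)"
    by (auto simp: in_keys_iff lookup_mult_single_one)
qed

lemma monomial_ideal_subset_divisible_support:
  "(monomial_ideal M :: (('v \<Rightarrow>\<^sub>0 nat) \<Rightarrow>\<^sub>0 'k::comm_ring_1) set)
    \<subseteq> {f. \<forall>a\<in>Poly_Mapping.keys f. \<exists>m\<in>M. \<exists>c. a = m + c}" (is "_ \<subseteq> ?T")
  unfolding monomial_ideal_def ideal_gen_def
proof (rule ring_module.span_minimal)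
  show "(\<lambda>m. Poly_Mapping.single m 1) ` M \<subseteq> ?T"
    by (force split: if_splits)
  show "ring_module.subspace ?T"
    unfolding ring_module.subspace_def
  proof (intro conjI allI ballI)
    fix x y assume "x \<in> ?T" "y \<in> ?T"
    then show "x + y \<in> ?T" using keys_add[of x y] by blast
  next
    fix c x assume x: "x \<in> ?T"
    show "c * x \<in> ?T"
    proof (rule CollectI, rule ballI)
      fix a assume "a \<in> Poly_Mapping.keys (c * x)"
      then obtain a' b where a: "a = a' + b" and "b \<in> Poly_Mapping.keys x" using keys_mult by blast
      with x obtain m d where "m \<in> M" "b = m + d" by blast
      with a have "m \<in> M \<and> a = m + (a' + d)" by (simp add: add_ac)
      then show "\<exists>m\<in>M. \<exists>c. a = m + c" by blast
    qed
  qed simp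
qed

lemma mem_monomial_ideal_iff:
  fixes f :: "('v \<Rightarrow>\<^sub>0 nat) \<Rightarrow>\<^sub>0 'k::comm_ring_1"
  shows "f \<in> monomial_ideal M \<longleftrightarrow> (\<forall>a\<in>Poly_Mapping.keys f. \<exists>m\<in>M. \<exists>c. a = m + c)"
proof
  show "f \<in> monomial_ideal M \<Longrightarrow> \<forall>a\<in>Poly_Mapping.keys f. \<exists>m\<in>M. \<exists>c. a = m + c"
    using monomial_ideal_subset_divisible_support by blast
next
  assume divisible: "\<forall>a\<in>Poly_Mapping.keys f. \<exists>m\<in>M. \<exists>c. a = m + c"
  have "Poly_Mapping.single a (Poly_Mapping.lookup f a) \<in> monomial_ideal M"
    if "a \<in> Poly_Mapping.keys f" for a
  proof -
    from divisible that obtain m c where "m \<in> M" and a: "a = m + c" by fast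
    then have "Poly_Mapping.single m 1 \<in> monomial_ideal M"
      unfolding monomial_ideal_def ideal_gen_def by (intro ring_module.span_base imageI)
    then have "Poly_Mapping.single c (Poly_Mapping.lookup f a) * Poly_Mapping.single m 1 \<in> monomial_ideal M"
      unfolding monomial_ideal_def ideal_gen_def by (rule ring_module.span_scale)
    then show ?thesis by (simp add: a mult_single add.commute)
  qed
  then show "f \<in> monomial_ideal M"
    by (subst poly_mapping_sum_single_lookup) (simp add: monomial_ideal_def ideal_gen_def ring_module.span_sum)
qed

lemma mem_colon_var_monomial_ideal_iff:
  fixes f :: "('v \<Rightarrow>\<^sub>0 nat) \<Rightarrow>\<^sub>0 'k::comm_ring_1"
  shows "f \<in> colon (monomial_ideal M) (var i)
    \<longleftrightarrow> (\<forall>a\<in>Poly_Mapping.keys f. \<exists>m\<in>M. \<exists>c. a + Poly_Mapping.single i 1 = m + c)"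
  by (simp add: colon_def var_def mem_monomial_ideal_iff keys_mult_single_one)

lemma ideal_sum_monomial_ideal:
  "ideal_sum (monomial_ideal A) (monomial_ideal B) = monomial_ideal (A \<union> B)"
  unfolding ideal_sum_def monomial_ideal_def ideal_gen_def image_Un ring_module.span_Un by simp

definition edge_monomials :: "'v set set \<Rightarrow> ('v \<Rightarrow>\<^sub>0 nat) set" where
  "edge_monomials E = {Poly_Mapping.single p 1 + Poly_Mapping.single q 1 | p q. {p, q} \<in> E}"

lemma edge_ideal_eq_monomial_ideal: "edge_ideal E = monomial_ideal (edge_monomials E)"
  unfolding edge_ideal_def monomial_ideal_def edge_monomials_def
  by (rule arg_cong[where f = ideal_gen]) (auto simp: var_def mult_single)

lemma ideal_gen_var_eq_monomial_ideal:
  "ideal_gen (var ` L) = monomial_ideal ((\<lambda>p. Poly_Mapping.single p 1) ` L)"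
  unfolding monomial_ideal_def by (simp add: var_def image_image)

lemma exists_add_iff_lookup_le:
  fixes a m :: "'v \<Rightarrow>\<^sub>0 nat"
  shows "(\<exists>c. a = m + c) \<longleftrightarrow> (\<forall>v. Poly_Mapping.lookup m v \<le> Poly_Mapping.lookup a v)"
proof
  assume "\<forall>v. Poly_Mapping.lookup m v \<le> Poly_Mapping.lookup a v"
  then have "a = m + (a - m)"
    by (intro poly_mapping_eqI) (simp add: lookup_add lookup_minus)
  then show "\<exists>c. a = m + c" ..
qed (auto simp: lookup_add)

lemma exists_add_single_iff:
  fixes a :: "'v \<Rightarrow>\<^sub>0 nat"
  shows "(\<exists>c. a = Poly_Mapping.single p 1 + c) \<longleftrightarrow> p \<in> Poly_Mapping.keys a"
  unfolding exists_add_iff_lookup_le by (auto simp: in_keys_iff lookup_single when_def)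

lemma exists_add_single_single_iff:
  fixes a :: "'v \<Rightarrow>\<^sub>0 nat"
  assumes "p \<noteq> q"
  shows "(\<exists>c. a = Poly_Mapping.single p 1 + Poly_Mapping.single q 1 + c)
    \<longleftrightarrow> p \<in> Poly_Mapping.keys a \<and> q \<in> Poly_Mapping.keys a"
  unfolding exists_add_iff_lookup_le
proof
  assume "\<forall>v. Poly_Mapping.lookup (Poly_Mapping.single p 1 + Poly_Mapping.single q 1) v
    \<le> Poly_Mapping.lookup a v"
  from this[rule_format, of p] this[rule_format, of q] assms
  show "p \<in> Poly_Mapping.keys a \<and> q \<in> Poly_Mapping.keys a"
    by (simp add: in_keys_iff lookup_add lookup_single)
qed (use assms in \<open>auto simp: in_keys_iff lookup_add lookup_single when_def\<close>)

lemma keys_add_single_one: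
  fixes a :: "'v \<Rightarrow>\<^sub>0 nat"
  shows "Poly_Mapping.keys (a + Poly_Mapping.single i 1) = insert i (Poly_Mapping.keys a)"
  by (auto simp: in_keys_iff lookup_add lookup_single when_def split: if_splits)

definition contains_edge :: "'v set set \<Rightarrow> 'v set \<Rightarrow> bool" where
  "contains_edge E U \<longleftrightarrow> (\<exists>p q. {p, q} \<in> E \<and> p \<in> U \<and> q \<in> U)"

lemma exists_add_edge_monomial_iff:
  assumes "\<And>p. {p} \<notin> E"
  shows "(\<exists>m\<in>edge_monomials E. \<exists>c. a = m + c) \<longleftrightarrow> contains_edge E (Poly_Mapping.keys a)"
proof -
  have "(\<exists>m\<in>edge_monomials E. \<exists>c. a = m + c)
    \<longleftrightarrow> (\<exists>p q. {p, q} \<in> E \<and> (\<exists>c. a = Poly_Mapping.single p 1 + Poly_Mapping.single q 1 + c))"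
    unfolding edge_monomials_def by blast
  also have "\<dots> \<longleftrightarrow> contains_edge E (Poly_Mapping.keys a)"
    unfolding contains_edge_def
  proof (intro ex_cong1 conj_cong refl)
    fix p q assume "{p, q} \<in> E"
    with assms[of p] have "p \<noteq> q" by auto
    then show "(\<exists>c. a = Poly_Mapping.single p 1 + Poly_Mapping.single q 1 + c)
      \<longleftrightarrow> p \<in> Poly_Mapping.keys a \<and> q \<in> Poly_Mapping.keys a"
      by (rule exists_add_single_single_iff)
  qed
  finally show ?thesis .
qed

lemma exists_add_single_image_iff:
  fixes a :: "'v \<Rightarrow>\<^sub>0 nat"
  shows "(\<exists>m\<in>(\<lambda>p. Poly_Mapping.single p 1) ` L. \<exists>c. a = m + c) \<longleftrightarrow> L \<inter> Poly_Mapping.keys a \<noteq> {}"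
proof -
  have "(\<exists>m\<in>(\<lambda>p. Poly_Mapping.single p 1) ` L. \<exists>c. a = m + c)
    \<longleftrightarrow> (\<exists>p\<in>L. \<exists>c. a = Poly_Mapping.single p 1 + c)"
    by blast
  then show ?thesis unfolding exists_add_single_iff by blast
qed

lemma contains_edge_insert:
  assumes "\<And>p. {p} \<notin> E"
  shows "contains_edge E (insert x U) \<longleftrightarrow> contains_edge E U \<or> nbr E x \<inter> U \<noteq> {}"
proof
  assume "contains_edge E (insert x U)"
  then obtain p q where pq: "{p, q} \<in> E" "p \<in> insert x U" "q \<in> insert x U"
    unfolding contains_edge_def by blast
  with assms[of p] have "p \<noteq> q" by auto
  with pq consider "p \<in> U" "q \<in> U" | "p = x" "q \<in> U" | "q = x" "p \<in> U" by auto
  then show "contains_edge E U \<or> nbr E x \<inter> U \<noteq> {}"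
  proof cases
    case 1
    with pq(1) show ?thesis unfolding contains_edge_def by blast
  next
    case 2
    with pq(1) show ?thesis unfolding nbr_def by blast
  next
    case 3
    with pq(1) show ?thesis unfolding nbr_def by (auto simp: insert_commute)
  qed
next
  assume "contains_edge E U \<or> nbr E x \<inter> U \<noteq> {}"
  then show "contains_edge E (insert x U)"
    unfolding contains_edge_def nbr_def by blast
qed

lemma contains_edge_Un: "contains_edge (A \<union> B) U \<longleftrightarrow> contains_edge A U \<or> contains_edge B U"
  unfolding contains_edge_def by blast

lemma nbr_del_vertices: "x \<notin> L \<Longrightarrow> nbr (del_vertices E L) x = nbr E x - L"
  unfolding nbr_def del_vertices_def by auto

lemma graph_G'_loop_free:
  assumes "\<And>p. {p} \<notin> E"
  shows "{p} \<notin> graph_G' E i j"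
proof
  define L where "L = nbr E i \<inter> nbr E j"
  assume "{p} \<in> graph_G' E i j"
  then consider "{p} \<in> del_vertices E L"
    | "p \<in> nbr (del_vertices E L) i" "p \<in> nbr (del_vertices E L) j"
    unfolding graph_G'_def Let_def L_def[symmetric] by (auto simp: doubleton_eq_iff)
  then show False
  proof cases
    case 1
    with assms show False by (simp add: del_vertices_def)
  next
    case 2
    then have "p \<in> L" and "{i, p} \<inter> L = {}"
      unfolding L_def nbr_def del_vertices_def by auto
    then show False by blast
  qed
qed

lemma contains_edge_graph_G'_iff:
  assumes loop_free: "\<And>p. {p} \<notin> E"
  shows "contains_edge E (insert i U) \<and> contains_edge E (insert j U)
    \<longleftrightarrow> contains_edge (graph_G' E i j) U \<or> nbr E i \<inter> nbr E j \<inter> U \<noteq> {}"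
proof (cases "nbr E i \<inter> nbr E j \<inter> U = {}")
  case True
  define L where "L = nbr E i \<inter> nbr E j"
  have "i \<notin> L" "j \<notin> L"
    using loop_free by (auto simp: L_def nbr_def)
  then have G': "graph_G' E i j
      = del_vertices E L \<union> {{p, q} | p q. p \<in> nbr E i - L \<and> q \<in> nbr E j - L}"
    unfolding graph_G'_def Let_def L_def[symmetric] by (simp add: nbr_del_vertices)
  have "contains_edge E U \<longleftrightarrow> contains_edge (del_vertices E L) U"
    using True unfolding contains_edge_def del_vertices_def L_def by blast
  moreover have "nbr E i \<inter> U \<noteq> {} \<and> nbr E j \<inter> U \<noteq> {}
      \<longleftrightarrow> contains_edge {{p, q} | p q. p \<in> nbr E i - L \<and> q \<in> nbr E j - L} U"
  proof
    assume "nbr E i \<inter> U \<noteq> {} \<and> nbr E j \<inter> U \<noteq> {}"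
    then obtain y z where yz: "y \<in> nbr E i" "y \<in> U" "z \<in> nbr E j" "z \<in> U" by blast
    with True have "y \<notin> L" "z \<notin> L" by (auto simp: L_def)
    with yz show "contains_edge {{p, q} | p q. p \<in> nbr E i - L \<and> q \<in> nbr E j - L} U"
      unfolding contains_edge_def by blast
  qed (auto simp: contains_edge_def doubleton_eq_iff)
  ultimately show ?thesis
    using True unfolding contains_edge_insert[OF loop_free] G' contains_edge_Un L_def[symmetric]
    by blast
next
  case False
  then show ?thesis
    unfolding contains_edge_insert[OF loop_free] by blast
qed

theorem lemma3p2:
  fixes E :: "'v::finite set set" and i j :: 'v
  assumes simple: "\<forall>e\<in>E. card e = 2"
    and edge: "{i, j} \<in> E"
  shows "(colon (edge_ideal E) (var i) \<inter> colon (edge_ideal E) (var j)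
            :: (('v \<Rightarrow>\<^sub>0 nat) \<Rightarrow>\<^sub>0 'k::field) set)
         = ideal_sum (edge_ideal (graph_G' E i j))
             (ideal_gen (var ` (nbr E i \<inter> nbr E j)))"
proof -
  have loop_free: "{p} \<notin> E" for p
    using simple by fastforce
  let ?L = "nbr E i \<inter> nbr E j"
  show ?thesis
  proof (rule set_eqI)
    fix f :: "('v \<Rightarrow>\<^sub>0 nat) \<Rightarrow>\<^sub>0 'k"
    have "f \<in> colon (edge_ideal E) (var i) \<inter> colon (edge_ideal E) (var j)
      \<longleftrightarrow> (\<forall>a\<in>Poly_Mapping.keys f. contains_edge E (insert i (Poly_Mapping.keys a))
                                   \<and> contains_edge E (insert j (Poly_Mapping.keys a)))"
      unfolding Int_iff edge_ideal_eq_monomial_ideal mem_colon_var_monomial_ideal_iff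
        exists_add_edge_monomial_iff[OF loop_free] keys_add_single_one ball_conj_distrib ..
    also have "\<dots> \<longleftrightarrow> (\<forall>a\<in>Poly_Mapping.keys f. contains_edge (graph_G' E i j) (Poly_Mapping.keys a)
                                   \<or> ?L \<inter> Poly_Mapping.keys a \<noteq> {})"
      by (simp add: contains_edge_graph_G'_iff[OF loop_free] Int_assoc)
    also have "\<dots> \<longleftrightarrow> f \<in> ideal_sum (edge_ideal (graph_G' E i j)) (ideal_gen (var ` ?L))"
      unfolding edge_ideal_eq_monomial_ideal ideal_gen_var_eq_monomial_ideal
        ideal_sum_monomial_ideal mem_monomial_ideal_iff bex_Un
        exists_add_edge_monomial_iff[OF graph_G'_loop_free[OF loop_free]]
        exists_add_single_image_iff ..
    finally show "f \<in> colon (edge_ideal E) (var i) \<inter> colon (edge_ideal E) (var j)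
      \<longleftrightarrow> f \<in> ideal_sum (edge_ideal (graph_G' E i j)) (ideal_gen (var ` ?L))" .
  qed
qed

end
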